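(* Let $f$ and $f^\bullet$ be scaling functions with $f\ll f^\bullet$. Suppose there exists a sequence of permutations $(\sigma_j)_{j\in\mathbb{N}}$ with $|\sigma_j|\to\infty$ that converges at scale $f$ to a limit $\Xi\in[0,1]^{S}$. Then there exists a sequence of permutations that converges at scale $f^\bullet$ to $\Xi$.
   Context: For functions $g,h:\mathbb{N}\to\mathbb{R}^+$, write $g\ll h$ if $g(n)/h(n)\to0$ as $n\to\infty$. A scaling function is a function $f:\mathbb{N}\to\mathbb{R}^+$ with $f(n)\le n$ for all $n$, $f(n)\to\infty$ and $f(n)/n\to 0$. Let $S_n$ be the set of permutations of $[n]=\{1,\dots,n\}$ and $S=\bigcup_n S_n$. An occurrence of a pattern $\pi\in S_k$ in $\sigma\in S_n$ is a $k$-element set of indices $i_1<\dots<i_k$ such that $\sigma(i_1)\dots\sigma(i_k)$ is order-isomorphic to $\pi$; its width is $i_k-i_1+1$. For real $f\in[k,n]$, $\rho_f(\pi,\sigma)$ is the number of occurrences of $\pi$ in $\sigma$ of width at most $f$ divided by the number of $k$-element subsets of $[n]$ of width at most $f$. A sequence $(\sigma_j)$ with $|\sigma_j|\to\infty$ converges at scale $f$ to $\Xi\in[0,1]^S$ if $\rho_{f(|\sigma_j|)}(\pi,\sigma_j)\to\Xi_\pi$ for every $\pi\in S$. *)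

theory Defs
  imports Complex_Main
begin

text \<open>A permutation of [n] (n \<ge> 1) is represented as the list of its values
  sigma(1), ..., sigma(n); list positions are 0-based, which does not affect widths.\<close>
definition is_perm :: "nat list \<Rightarrow> bool" where
  "is_perm \<sigma> \<longleftrightarrow> \<sigma> \<noteq> [] \<and> distinct \<sigma> \<and> set \<sigma> = {1..length \<sigma>}"

definition scaling_function :: "(nat \<Rightarrow> real) \<Rightarrow> bool" where
  "scaling_function f \<longleftrightarrow>
     (\<forall>n\<ge>1. 0 < f n \<and> f n \<le> real n) \<and>
     filterlim f at_top sequentially \<and>
     ((\<lambda>n. f n / real n) \<longlonglongrightarrow> 0)"

definition much_less :: "(nat \<Rightarrow> real) \<Rightarrow> (nat \<Rightarrow> real) \<Rightarrow> bool" where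
  "much_less g h \<longleftrightarrow> ((\<lambda>n. g n / h n) \<longlonglongrightarrow> 0)"

definition occurrence :: "nat list \<Rightarrow> nat list \<Rightarrow> nat set \<Rightarrow> bool" where
  "occurrence \<pi> \<sigma> I \<longleftrightarrow> I \<subseteq> {0..<length \<sigma>} \<and> card I = length \<pi> \<and>
     (\<forall>a<length \<pi>. \<forall>b<length \<pi>.
        \<pi> ! a < \<pi> ! b \<longleftrightarrow>
        \<sigma> ! (sorted_list_of_set I ! a) < \<sigma> ! (sorted_list_of_set I ! b))"

definition width :: "nat set \<Rightarrow> nat" where
  "width I = Max I - Min I + 1"

definition rho :: "real \<Rightarrow> nat list \<Rightarrow> nat list \<Rightarrow> real" where
  "rho f \<pi> \<sigma> =
     real (card {I. occurrence \<pi> \<sigma> I \<and> real (width I) \<le> f}) /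
     real (card {I. I \<subseteq> {0..<length \<sigma>} \<and> card I = length \<pi> \<and> real (width I) \<le> f})"

definition converges_at_scale ::
    "(nat \<Rightarrow> real) \<Rightarrow> (nat \<Rightarrow> nat list) \<Rightarrow> (nat list \<Rightarrow> real) \<Rightarrow> bool" where
  "converges_at_scale f \<sigma>s \<Xi> \<longleftrightarrow>
     filterlim (\<lambda>j. length (\<sigma>s j)) at_top sequentially \<and>
     (\<forall>\<pi>. is_perm \<pi> \<longrightarrow>
        ((\<lambda>j. rho (f (length (\<sigma>s j))) \<pi> (\<sigma>s j)) \<longlonglongrightarrow> \<Xi> \<pi>))"

end

theory Submission
  imports Defs "HOL-Library.FuncSet"
begin

text \<open>Let \<sigma> have length n and pick m with fb(m) \<gg> f(n) and m \<gg> n fb(m) / f(n). Put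
  c \<approx> fb(m) / f(n) and build a permutation \<tau> of length m by inflating every entry of \<sigma> into an
  increasing run of c consecutive values, stacking r \<approx> m / (c n) increasing copies of the result
  and padding with fixed points. A k-set of positions of \<sigma>, together with a copy and an offset
  inside the run of each chosen entry, lifts injectively to a k-set of positions of \<tau> that is an
  occurrence of \<pi> exactly when the original set is, and whose width is c times the original width
  up to an error below 2c. As r, c \<rightarrow> \<infinity>, the lifts of the k-sets of width at most f(n) make up
  almost all k-sets of width at most fb(m) in \<tau>, so the pattern densities of \<sigma> at scale f and
  of \<tau> at scale fb differ by an error tending to 0.\<close>

lemma binomial_mult_fact_le_power: "real (a choose j) * fact j \<le> real a ^ j"
proof -
  have "(a choose j) * fact j \<le> a ^ j" by (rule binomial_fact_pow)
  then have "real ((a choose j) * fact j) \<le> real (a ^ j)" by (simp only: of_nat_le_iff)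
  then show ?thesis by simp
qed

lemma power_le_fact_mult_binomial:
  assumes "j \<le> a"
  shows "(real a - real j + 1) ^ j \<le> fact j * real (a choose j)"
proof -
  have "fact j * real (a choose j) = pochhammer (real a - real j + 1) j"
    by (simp add: binomial_gbinomial gbinomial_pochhammer')
  also have "\<dots> = (\<Prod>i<j. (real a - real j + 1) + real i)"
    by (simp add: pochhammer_prod atLeast0LessThan)
  also have "\<dots> \<ge> (\<Prod>i<j. (real a - real j + 1))"
    by (rule prod_mono) (use assms in auto)
  finally show ?thesis by simp
qed

lemma sorted_list_of_set_image_strict_mono_on:
  assumes "finite I" "strict_mono_on I g"
  shows "sorted_list_of_set (g ` I) = map g (sorted_list_of_set I)"
proof -
  have "sorted_wrt (<) (map g (sorted_list_of_set I))"
    unfolding sorted_wrt_map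
  proof (rule sorted_wrt_mono_rel[OF _ strict_sorted_list_of_set])
    fix x y assume "x \<in> set (sorted_list_of_set I)" "y \<in> set (sorted_list_of_set I)" "x < y"
    then show "g x < g y" using assms by (auto simp: strict_mono_on_def)
  qed
  moreover have "length (map g (sorted_list_of_set I)) = card (g ` I)"
    using card_image[OF strict_mono_on_imp_inj_on[OF assms(2)]] by simp
  ultimately show ?thesis using assms
    by (metis finite_imageI set_map set_sorted_list_of_set sorted_list_of_set_unique)
qed

lemma Max_Min_image_strict_mono_on:
  assumes "finite I" "I \<noteq> {}" "strict_mono_on I g"
  shows "Max (g ` I) = g (Max I)" and "Min (g ` I) = g (Min I)"
proof -
  have mono: "g x \<le> g y" if "x \<in> I" "y \<in> I" "x \<le> y" for x y
    using assms(3) that unfolding strict_mono_on_def by (cases "x = y") (auto intro: less_imp_le)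
  show "Max (g ` I) = g (Max I)"
    by (rule Max_eqI) (use assms in \<open>auto intro!: mono Max_ge Max_in\<close>)
  show "Min (g ` I) = g (Min I)"
    by (rule Min_eqI) (use assms in \<open>auto intro!: mono Min_le Min_in\<close>)
qed

lemma is_perm_length_pos: "is_perm \<sigma> \<Longrightarrow> length \<sigma> \<ge> 1"
  unfolding is_perm_def by (simp add: Suc_leI)

lemma is_perm_nth: "is_perm \<sigma> \<Longrightarrow> b < length \<sigma> \<Longrightarrow> \<sigma> ! b \<in> {1..length \<sigma>}"
  unfolding is_perm_def using nth_mem by blast

section \<open>Narrow sets of positions\<close>

definition narrow_subsets :: "nat \<Rightarrow> nat \<Rightarrow> real \<Rightarrow> nat set set" where
  "narrow_subsets n k x = {I. I \<subseteq> {0..<n} \<and> card I = k \<and> real (width I) \<le> x}"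

definition narrow_occurrences :: "nat list \<Rightarrow> nat list \<Rightarrow> real \<Rightarrow> nat set set" where
  "narrow_occurrences \<pi> \<sigma> x = {I. occurrence \<pi> \<sigma> I \<and> real (width I) \<le> x}"

lemma rho_eq_card_ratio:
  "rho x \<pi> \<sigma> = real (card (narrow_occurrences \<pi> \<sigma> x))
     / real (card (narrow_subsets (length \<sigma>) (length \<pi>) x))"
  unfolding rho_def narrow_occurrences_def narrow_subsets_def by simp

lemma finite_narrow_subsets: "finite (narrow_subsets n k x)"
  unfolding narrow_subsets_def by (rule finite_subset[of _ "Pow {0..<n}"]) auto

lemma narrow_occurrences_subset:
  "narrow_occurrences \<pi> \<sigma> x \<subseteq> narrow_subsets (length \<sigma>) (length \<pi>) x"
  unfolding narrow_occurrences_def narrow_subsets_def occurrence_def by auto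

lemma finite_narrow_occurrences: "finite (narrow_occurrences \<pi> \<sigma> x)"
  using finite_subset[OF narrow_occurrences_subset finite_narrow_subsets] .

lemma narrow_subsets_mono: "x \<le> y \<Longrightarrow> narrow_subsets n k x \<subseteq> narrow_subsets n k y"
  unfolding narrow_subsets_def by auto

lemma width_le_if_subset_interval:
  assumes "finite J" "J \<noteq> {}" "J \<subseteq> {s..s+d}"
  shows "width J \<le> d + 1"
proof -
  have "Min J \<ge> s" "Max J \<le> s + d" using assms by (auto simp: Min_ge_iff Max_le_iff)
  then show ?thesis unfolding width_def by linarith
qed

text \<open>A narrow set is its minimum s together with a (k-1)-subset of the offsets {1..w-1}
  from s, where w = \<lfloor>x\<rfloor>; only s < n + 1 - w is guaranteed to fit into {0..<n}.\<close>

lemma card_narrow_subsets_ge: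
  assumes k: "k \<ge> 1" and x: "x \<ge> 1"
  defines "w \<equiv> nat \<lfloor>x\<rfloor>"
  shows "(n + 1 - w) * ((w - 1) choose (k - 1)) \<le> card (narrow_subsets n k x)"
proof -
  have w1: "w \<ge> 1" and wx: "real w \<le> x" using x unfolding w_def by linarith+
  define A where "A = {..<n+1-w} \<times> {D. D \<subseteq> {1..w-1} \<and> card D = k - 1}"
  define h where "h = (\<lambda>(s::nat, D::nat set). insert s ((+) s ` D))"
  have card_A: "card A = (n + 1 - w) * ((w - 1) choose (k - 1))"
    unfolding A_def by (simp add: card_cartesian_product n_subsets)
  have "inj_on h A"
  proof (rule inj_onI)
    fix p q assume p: "p \<in> A" and q: "q \<in> A" and e: "h p = h q"
    obtain s D s' D' where ps: "p = (s, D)" and qs: "q = (s', D')" by (cases p, cases q)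
    have D: "D \<subseteq> {1..w-1}" "D' \<subseteq> {1..w-1}" using p q ps qs A_def by auto
    then have fin: "finite D" "finite D'" using finite_subset by blast+
    have "Min (h p) = s" "Min (h q) = s'" unfolding ps qs h_def using D fin
      by (auto intro!: Min_eqI)
    then have ss: "s = s'" using e by simp
    have "(+) s ` D = h p - {s}" "(+) s ` D' = h q - {s}"
      unfolding ps qs h_def using D ss by auto
    then have "(+) s ` D = (+) s ` D'" using e by simp
    then have "D = D'" by (simp add: inj_image_eq_iff)
    then show "p = q" using ps qs ss by simp
  qed
  moreover have "h ` A \<subseteq> narrow_subsets n k x"
  proof
    fix J assume "J \<in> h ` A"
    then obtain s D where sD: "s < n + 1 - w" "D \<subseteq> {1..w-1}" "card D = k - 1"
      and J: "J = insert s ((+) s ` D)"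
      unfolding A_def h_def by auto
    have fin: "finite D" using sD finite_subset by blast
    have J_sub: "J \<subseteq> {s..s+(w-1)}" using J sD by auto
    then have "width J \<le> w - 1 + 1" by (rule width_le_if_subset_interval[rotated 2]) (use J fin in auto)
    then have "real (width J) \<le> x" using wx w1 by linarith
    moreover have "J \<subseteq> {0..<n}" using J_sub sD w1 by fastforce
    moreover have "card J = k"
    proof -
      have "s \<notin> (+) s ` D" using sD by auto
      then have "card J = Suc (card ((+) s ` D))" using J fin by simp
      then show ?thesis using sD k by (simp add: card_image)
    qed
    ultimately show "J \<in> narrow_subsets n k x" unfolding narrow_subsets_def by auto
  qed
  ultimately show ?thesis
    using card_A card_image card_mono[OF finite_narrow_subsets] by metis
qed

lemma card_narrow_subsets_le:
  fixes x :: real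
  assumes k: "k \<ge> 1"
  defines "w \<equiv> nat \<lfloor>x\<rfloor>"
  shows "card (narrow_subsets n k x) \<le> n * ((w - 1) choose (k - 1))"
proof -
  define U where "U = narrow_subsets n k x"
  define B where "B = {..<n} \<times> {D. D \<subseteq> {1..w-1} \<and> card D = k - 1}"
  define h where "h = (\<lambda>J::nat set. (Min J, (\<lambda>y. y - Min J) ` (J - {Min J})))"
  have card_B: "card B = n * ((w - 1) choose (k - 1))"
    unfolding B_def by (simp add: card_cartesian_product n_subsets)
  have U_facts: "finite J \<and> J \<noteq> {} \<and> J \<subseteq> {0..<n} \<and> card J = k \<and> real (width J) \<le> x"
    if "J \<in> U" for J
    using that k unfolding U_def narrow_subsets_def by (auto intro: finite_subset)
  have recover: "J = insert (Min J) ((+) (Min J) ` snd (h J))" if "J \<in> U" for J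
  proof -
    have "finite J" "J \<noteq> {}" using U_facts[OF that] by auto
    then have "Min J \<in> J" "\<forall>y\<in>J. Min J \<le> y" by auto
    then show ?thesis unfolding h_def by (auto simp: image_iff intro!: bexI)
  qed
  have "inj_on h U"
  proof (rule inj_onI)
    fix J J' assume "J \<in> U" "J' \<in> U" "h J = h J'"
    moreover from \<open>h J = h J'\<close> have "Min J = Min J'" unfolding h_def by simp
    ultimately show "J = J'" using recover by metis
  qed
  moreover have "h ` U \<subseteq> B"
  proof
    fix p assume "p \<in> h ` U"
    then obtain J where J: "J \<in> U" "p = h J" by auto
    note JF = U_facts[OF J(1)]
    have mn: "Min J \<in> J" using JF Min_in by blast
    then have "Min J < n" using JF by (meson atLeastLessThan_iff subsetD)
    have wd: "Max J - Min J + 1 \<le> w" using JF unfolding width_def w_def by linarith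
    have D1: "(\<lambda>y. y - Min J) ` (J - {Min J}) \<subseteq> {1..w-1}"
    proof
      fix z assume "z \<in> (\<lambda>y. y - Min J) ` (J - {Min J})"
      then obtain y where y: "y \<in> J" "y \<noteq> Min J" "z = y - Min J" by auto
      have "Min J \<le> y" "y \<le> Max J" using JF y by auto
      then show "z \<in> {1..w-1}" using y wd by auto
    qed
    have "inj_on (\<lambda>y. y - Min J) (J - {Min J})"
    proof (rule inj_onI)
      fix y z assume "y \<in> J - {Min J}" "z \<in> J - {Min J}" "y - Min J = z - Min J"
      moreover have "Min J \<le> y" "Min J \<le> z" using JF calculation by auto
      ultimately show "y = z" by linarith
    qed
    then have "card ((\<lambda>y. y - Min J) ` (J - {Min J})) = k - 1"
      using JF mn by (simp add: card_image)
    then show "p \<in> B" using J D1 \<open>Min J < n\<close> unfolding B_def h_def by auto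
  qed
  ultimately have "card U \<le> card B"
    by (intro card_inj_on_le) (auto simp: B_def)
  then show ?thesis using card_B unfolding U_def by simp
qed

lemma card_narrow_subsets_lower_bound:
  assumes k: "k \<ge> 1" and x: "real k + 1 \<le> x" and xn: "x < real n"
  shows "(real n - x) * (x - real k) ^ (k - 1) \<le> fact (k - 1) * real (card (narrow_subsets n k x))"
proof -
  define w where "w = nat \<lfloor>x\<rfloor>"
  have wx: "real w \<le> x" "real w > x - 1" using x unfolding w_def by linarith+
  have wk: "w \<ge> k + 1" using x unfolding w_def by linarith
  have wn: "w \<le> n" using wx xn by linarith
  have count: "(n + 1 - w) * ((w - 1) choose (k - 1)) \<le> card (narrow_subsets n k x)"
    using card_narrow_subsets_ge[OF k, of x n] x unfolding w_def by linarith
  have "(x - real k) ^ (k - 1) \<le> (real (w - 1) - real (k - 1) + 1) ^ (k - 1)"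
    by (rule power_mono) (use wx wk k x in auto)
  also have "\<dots> \<le> fact (k - 1) * real ((w - 1) choose (k - 1))"
    by (rule power_le_fact_mult_binomial) (use wk in simp)
  finally have binom: "(x - real k) ^ (k - 1) \<le> fact (k - 1) * real ((w - 1) choose (k - 1))" .
  have "(real n - x) * (x - real k) ^ (k - 1)
      \<le> real (n + 1 - w) * (fact (k - 1) * real ((w - 1) choose (k - 1)))"
    by (rule mult_mono[OF _ binom]) (use wn wx xn x in auto)
  also have "\<dots> = fact (k - 1) * real ((n + 1 - w) * ((w - 1) choose (k - 1)))" by simp
  also have "\<dots> \<le> fact (k - 1) * real (card (narrow_subsets n k x))"
    using count by (intro mult_left_mono) (simp only: of_nat_le_iff, simp)
  finally show ?thesis .
qed

lemma card_narrow_subsets_upper_bound: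
  assumes k: "k \<ge> 1" and x: "x \<ge> 0"
  shows "fact (k - 1) * real (card (narrow_subsets n k x)) \<le> real n * x ^ (k - 1)"
proof -
  define w where "w = nat \<lfloor>x\<rfloor>"
  have wx: "real (w - 1) \<le> x" unfolding w_def using x by linarith
  have "fact (k - 1) * real (card (narrow_subsets n k x))
      \<le> fact (k - 1) * (real n * real ((w - 1) choose (k - 1)))"
    using card_narrow_subsets_le[OF k, of n x] unfolding w_def
    by (intro mult_left_mono) (simp_all only: of_nat_mult[symmetric] of_nat_le_iff, auto)
  also have "\<dots> = real n * (real ((w - 1) choose (k - 1)) * fact (k - 1))" by simp
  also have "\<dots> \<le> real n * real (w - 1) ^ (k - 1)"
    by (intro mult_left_mono binomial_mult_fact_le_power) auto
  also have "\<dots> \<le> real n * x ^ (k - 1)" by (intro mult_left_mono power_mono wx) auto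
  finally show ?thesis .
qed

section \<open>The blow-up of a permutation\<close>

text \<open>Position p = a * (c * n) + c * b + t (copy a < r, entry b < n, offset t < c) of the
  blow-up holds a * (c * n) + c * (\<sigma> ! b - 1) + t + 1: every entry of \<sigma> becomes an increasing
  run of c consecutive values, the r copies are stacked increasingly, and positions beyond
  r * (c * n) are fixed points.\<close>

definition blowup_entry :: "nat list \<Rightarrow> nat \<Rightarrow> nat \<Rightarrow> nat \<Rightarrow> nat" where
  "blowup_entry \<sigma> c r p =
     (if p < r * (c * length \<sigma>) then
        (p div (c * length \<sigma>)) * (c * length \<sigma>) + c * (\<sigma> ! ((p mod (c * length \<sigma>)) div c) - 1)
          + p mod c + 1
      else p + 1)"

definition blowup :: "nat list \<Rightarrow> nat \<Rightarrow> nat \<Rightarrow> nat \<Rightarrow> nat list" where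
  "blowup \<sigma> c r m = map (blowup_entry \<sigma> c r) [0..<m]"

lemma length_blowup [simp]: "length (blowup \<sigma> c r m) = m"
  unfolding blowup_def by simp

lemma nth_blowup: "p < m \<Longrightarrow> blowup \<sigma> c r m ! p = blowup_entry \<sigma> c r p"
  unfolding blowup_def by simp

lemma mult_add_less_mult:
  fixes b t c n :: nat
  assumes "b < n" "t < c"
  shows "c * b + t < c * n"
proof -
  have "c * b + t < c * Suc b" using assms by simp
  also have "\<dots> \<le> c * n" using assms by (intro mult_le_mono2) simp
  finally show ?thesis .
qed

lemma mixed_radix_less:
  fixes a b t r c n :: nat
  assumes "a < r" "b < n" "t < c"
  shows "a * (c * n) + c * b + t < r * (c * n)"
proof -
  have "a * (c * n) + c * b + t < Suc a * (c * n)"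
    using mult_add_less_mult[OF assms(2,3)] by simp
  also have "\<dots> \<le> r * (c * n)" using assms by (intro mult_le_mono1) simp
  finally show ?thesis .
qed

lemma mixed_radix_div_mod:
  fixes a b t c n :: nat
  assumes "b < n" "t < c"
  shows "(a * (c * n) + c * b + t) div (c * n) = a"
    and "(a * (c * n) + c * b + t) mod (c * n) = c * b + t"
    and "(a * (c * n) + c * b + t) mod c = t"
    and "(c * b + t) div c = b"
proof -
  have lt: "c * b + t < c * n" using mult_add_less_mult[OF assms] .
  then have "c * n \<noteq> 0" by linarith
  then show "(a * (c * n) + c * b + t) div (c * n) = a"
    and "(a * (c * n) + c * b + t) mod (c * n) = c * b + t"
    using lt by (simp_all add: add.assoc)
  have "a * (c * n) + c * b + t = t + c * (a * n + b)" by (simp add: algebra_simps)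
  then show "(a * (c * n) + c * b + t) mod c = t" using assms by simp
  show "(c * b + t) div c = b" using assms by simp
qed

lemma mixed_radix_unique:
  fixes a b t a' b' t' c n :: nat
  assumes "b < n" "t < c" "b' < n" "t' < c"
    and "a * (c * n) + c * b + t = a' * (c * n) + c * b' + t'"
  shows "a = a'" "b = b'" "t = t'"
  using mixed_radix_div_mod[OF assms(1,2)] mixed_radix_div_mod[OF assms(3,4)] assms(5)
  by metis+

lemma mixed_radix_cases:
  fixes p r c n :: nat
  assumes "c \<ge> 1" "n \<ge> 1" "p < r * (c * n)"
  obtains a b t where "a < r" "b < n" "t < c" "p = a * (c * n) + c * b + t"
proof
  show "p div (c * n) < r" using assms by (simp add: div_less_iff_less_mult)
  show "(p mod (c * n)) div c < n"
    using assms by (simp add: div_less_iff_less_mult mult.commute)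
  show "p mod c < c" using assms by simp
  have "p mod (c * n) = c * ((p mod (c * n)) div c) + p mod c"
    by (metis div_mult_mod_eq mod_mult_self2_is_0 mod_mod_cancel dvd_triv_left add.commute mult.commute)
  then show "p = p div (c * n) * (c * n) + c * (p mod (c * n) div c) + p mod c"
    by (metis add.assoc div_mult_mod_eq)
qed

lemma blowup_entry_eq:
  assumes "a < r" "b < length \<sigma>" "t < c"
  shows "blowup_entry \<sigma> c r (a * (c * length \<sigma>) + c * b + t)
    = a * (c * length \<sigma>) + c * (\<sigma> ! b - 1) + t + 1"
  unfolding blowup_entry_def
  using mixed_radix_less[OF assms] mixed_radix_div_mod[OF assms(2,3)] by simp

lemma blowup_entry_in_range:
  assumes "is_perm \<sigma>" "c \<ge> 1" "r * (c * length \<sigma>) \<le> m" "p < m"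
  shows "blowup_entry \<sigma> c r p \<in> {1..m}"
proof (cases "p < r * (c * length \<sigma>)")
  case True
  then obtain a b t where abt: "a < r" "b < length \<sigma>" "t < c" "p = a * (c * length \<sigma>) + c * b + t"
    using mixed_radix_cases assms(1,2) is_perm_length_pos by metis
  have "\<sigma> ! b - 1 < length \<sigma>" using is_perm_nth[OF assms(1) abt(2)] by auto
  then have "a * (c * length \<sigma>) + c * (\<sigma> ! b - 1) + t < r * (c * length \<sigma>)"
    using mixed_radix_less abt by blast
  then show ?thesis using blowup_entry_eq[OF abt(1-3)] abt(4) assms(3) by simp
next
  case False
  then show ?thesis using assms unfolding blowup_entry_def by auto
qed

lemma blowup_entry_surj:
  assumes "is_perm \<sigma>" "c \<ge> 1" "r * (c * length \<sigma>) \<le> m" "v \<in> {1..m}"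
  shows "\<exists>p<m. blowup_entry \<sigma> c r p = v"
proof (cases "v - 1 < r * (c * length \<sigma>)")
  case True
  then obtain a w t where awt: "a < r" "w < length \<sigma>" "t < c"
    "v - 1 = a * (c * length \<sigma>) + c * w + t"
    using mixed_radix_cases assms(1,2) is_perm_length_pos by metis
  have "w + 1 \<in> set \<sigma>" using assms(1) awt(2) unfolding is_perm_def by auto
  then obtain b where b: "b < length \<sigma>" "\<sigma> ! b = w + 1" by (auto simp: in_set_conv_nth)
  have "blowup_entry \<sigma> c r (a * (c * length \<sigma>) + c * b + t) = v"
    using blowup_entry_eq[OF awt(1) b(1) awt(3)] b(2) awt(4) assms(4) by auto
  moreover have "a * (c * length \<sigma>) + c * b + t < m"
    using mixed_radix_less[OF awt(1) b(1) awt(3)] assms(3) by linarith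
  ultimately show ?thesis by blast
next
  case False
  then show ?thesis using assms unfolding blowup_entry_def by (intro exI[of _ "v - 1"]) auto
qed

lemma is_perm_blowup:
  assumes "is_perm \<sigma>" "c \<ge> 1" "r * (c * length \<sigma>) \<le> m" "m \<ge> 1"
  shows "is_perm (blowup \<sigma> c r m)"
proof -
  have img: "blowup_entry \<sigma> c r ` {0..<m} = {1..m}"
    using blowup_entry_in_range[OF assms(1-3)] blowup_entry_surj[OF assms(1-3)]
    by (fastforce simp: image_iff)
  then have "inj_on (blowup_entry \<sigma> c r) {0..<m}"
    by (intro eq_card_imp_inj_on) simp_all
  then show ?thesis
    using img assms(4) unfolding is_perm_def blowup_def by (auto simp: distinct_map)
qed

lemma blowup_value_less_iff:
  assumes "is_perm \<sigma>" "b < length \<sigma>" "b' < length \<sigma>" "t < c" "t' < c"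
    and "b = b' \<Longrightarrow> t = t'"
  shows "c * (\<sigma> ! b - 1) + t < c * (\<sigma> ! b' - 1) + t' \<longleftrightarrow> \<sigma> ! b < \<sigma> ! b'"
proof -
  have pos: "\<sigma> ! b \<ge> 1" "\<sigma> ! b' \<ge> 1" using is_perm_nth[OF assms(1)] assms(2,3) by auto
  consider "\<sigma> ! b < \<sigma> ! b'" | "\<sigma> ! b' < \<sigma> ! b" | "\<sigma> ! b = \<sigma> ! b'" by linarith
  then show ?thesis
  proof cases
    case 1
    then have "c * (\<sigma> ! b - 1) + t < c * (\<sigma> ! b' - 1)"
      using pos assms(4) by (intro mult_add_less_mult) linarith+
    then show ?thesis using 1 by linarith
  next
    case 2
    then have "c * (\<sigma> ! b' - 1) + t' < c * (\<sigma> ! b - 1)"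
      using pos assms(5) by (intro mult_add_less_mult) linarith+
    then show ?thesis using 2 by linarith
  next
    case 3
    then have "b = b'"
      using assms(1-3) nth_eq_iff_index_eq unfolding is_perm_def by blast
    then show ?thesis using assms(6) 3 by simp
  qed
qed

section \<open>Lifting sets of positions into the blow-up\<close>

text \<open>A triple (a, I, t) selects a copy a, a set I of positions of \<sigma> and an offset t b
  inside the run of every b \<in> I; it lifts to the corresponding set of positions of the blow-up.\<close>

definition lift_pos :: "nat \<Rightarrow> nat \<Rightarrow> nat \<Rightarrow> (nat \<Rightarrow> nat) \<Rightarrow> nat \<Rightarrow> nat" where
  "lift_pos c n a t b = a * (c * n) + c * b + t b"

definition lift_data :: "nat \<Rightarrow> nat \<Rightarrow> nat set set \<Rightarrow> (nat \<times> nat set \<times> (nat \<Rightarrow> nat)) set" where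
  "lift_data r c \<A> = {0..<r} \<times> (SIGMA I:\<A>. I \<rightarrow>\<^sub>E {0..<c})"

definition lift :: "nat \<Rightarrow> nat \<Rightarrow> nat \<times> nat set \<times> (nat \<Rightarrow> nat) \<Rightarrow> nat set" where
  "lift c n = (\<lambda>(a, I, t). lift_pos c n a t ` I)"

lemma strict_mono_on_lift_pos:
  assumes "t \<in> I \<rightarrow>\<^sub>E {0..<c}"
  shows "strict_mono_on I (lift_pos c n a t)"
proof (rule strict_mono_onI)
  fix b b' assume "b \<in> I" "b' \<in> I" "b < b'"
  moreover have "t b < c" using assms \<open>b \<in> I\<close> by auto
  ultimately have "c * b + t b < c * b'" using mult_add_less_mult by blast
  then show "lift_pos c n a t b < lift_pos c n a t b'" unfolding lift_pos_def by simp
qed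

lemma card_lift_pos_image:
  "t \<in> I \<rightarrow>\<^sub>E {0..<c} \<Longrightarrow> card (lift_pos c n a t ` I) = card I"
  by (rule card_image[OF strict_mono_on_imp_inj_on[OF strict_mono_on_lift_pos]])

lemma lift_pos_image_subset:
  assumes "t \<in> I \<rightarrow>\<^sub>E {0..<c}" "I \<subseteq> {0..<n}" "a < r"
  shows "lift_pos c n a t ` I \<subseteq> {0..<r * (c * n)}"
proof
  fix p assume "p \<in> lift_pos c n a t ` I"
  then obtain b where "b \<in> I" "p = a * (c * n) + c * b + t b" unfolding lift_pos_def by auto
  moreover have "b < n" "t b < c" using assms \<open>b \<in> I\<close> by auto
  ultimately show "p \<in> {0..<r * (c * n)}" using mixed_radix_less[OF assms(3)] by simp
qed

lemma width_lift_pos_image: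
  assumes "t \<in> I \<rightarrow>\<^sub>E {0..<c}" "finite I" "I \<noteq> {}" "c \<ge> 1"
  shows "real (width (lift_pos c n a t ` I)) \<le> real c * real (width I)"
    and "real (width I) \<le> real (width (lift_pos c n a t ` I)) / real c + 2"
proof -
  let ?g = "lift_pos c n a t"
  have in_I: "Max I \<in> I" "Min I \<in> I" using assms Max_in Min_in by auto
  have "Min I \<le> Max I" using assms by simp
  then have "?g (Min I) \<le> ?g (Max I)"
    using strict_mono_on_lift_pos[OF assms(1)] in_I
    by (metis order_le_less strict_mono_onD)
  then have width_image: "real (width (?g ` I)) = real (?g (Max I)) - real (?g (Min I)) + 1"
    unfolding width_def Max_Min_image_strict_mono_on[OF assms(2,3) strict_mono_on_lift_pos[OF assms(1)]]
    by simp
  have width_I: "real (width I) = real (Max I) - real (Min I) + 1"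
    unfolding width_def using \<open>Min I \<le> Max I\<close> by simp
  have "real (?g (Max I)) - real (?g (Min I))
      = real c * (real (Max I) - real (Min I)) + real (t (Max I)) - real (t (Min I))"
    unfolding lift_pos_def by (simp add: algebra_simps)
  moreover have "real (t (Max I)) \<le> real c - 1" "real (t (Min I)) \<le> real c - 1"
    using in_I assms(1) by (auto simp: of_nat_diff[symmetric] PiE_iff)
  ultimately show "real (width (?g ` I)) \<le> real c * real (width I)"
    and "real (width I) \<le> real (width (?g ` I)) / real c + 2"
    unfolding width_image width_I using assms(4) by (auto simp: field_simps)
qed

lemma nth_blowup_lift_pos:
  assumes "a < r" "b < length \<sigma>" "t b < c" "r * (c * length \<sigma>) \<le> m"
  shows "blowup \<sigma> c r m ! lift_pos c (length \<sigma>) a t b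
    = a * (c * length \<sigma>) + c * (\<sigma> ! b - 1) + t b + 1"
  using mixed_radix_less[OF assms(1-3)] assms(4) nth_blowup blowup_entry_eq[OF assms(1-3)]
  unfolding lift_pos_def by simp

lemma occurrence_blowup_lift_pos_image:
  assumes "is_perm \<sigma>" "a < r" "I \<subseteq> {0..<length \<sigma>}" "card I = length \<pi>"
    "t \<in> I \<rightarrow>\<^sub>E {0..<c}" "r * (c * length \<sigma>) \<le> m"
  shows "occurrence \<pi> (blowup \<sigma> c r m) (lift_pos c (length \<sigma>) a t ` I) \<longleftrightarrow> occurrence \<pi> \<sigma> I"
proof -
  let ?g = "lift_pos c (length \<sigma>) a t" and ?\<tau> = "blowup \<sigma> c r m"
  let ?s = "sorted_list_of_set I"
  have fin: "finite I" using assms(3) finite_subset by blast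
  have sorted_image: "sorted_list_of_set (?g ` I) = map ?g ?s"
    by (rule sorted_list_of_set_image_strict_mono_on[OF fin strict_mono_on_lift_pos[OF assms(5)]])
  have len: "length ?s = length \<pi>" using assms(4) by simp
  have in_I: "?s ! i \<in> I" if "i < length \<pi>" for i
    using that len fin by (metis nth_mem set_sorted_list_of_set)
  have order: "?\<tau> ! (sorted_list_of_set (?g ` I) ! i) < ?\<tau> ! (sorted_list_of_set (?g ` I) ! j)
      \<longleftrightarrow> \<sigma> ! (?s ! i) < \<sigma> ! (?s ! j)"
    if "i < length \<pi>" "j < length \<pi>" for i j
  proof -
    have "?s ! i \<in> I" "?s ! j \<in> I" using in_I that by auto
    then have "?s ! i < length \<sigma>" "?s ! j < length \<sigma>" "t (?s ! i) < c" "t (?s ! j) < c"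
      using assms(3,5) by auto
    then show ?thesis
      using sorted_image len that nth_blowup_lift_pos[OF assms(2) _ _ assms(6)]
        blowup_value_less_iff[OF assms(1)] by simp
  qed
  have "?g ` I \<subseteq> {0..<length ?\<tau>}"
    using lift_pos_image_subset[OF assms(5,3,2)] assms(6) by auto
  moreover have "card (?g ` I) = length \<pi>" using card_lift_pos_image[OF assms(5)] assms(4) by simp
  ultimately show ?thesis unfolding occurrence_def using assms(3,4) order by auto
qed

lemma card_lift_data:
  assumes "finite \<A>" "\<forall>I\<in>\<A>. finite I \<and> card I = k"
  shows "card (lift_data r c \<A>) = r * (c ^ k * card \<A>)"
proof -
  have "card (SIGMA I:\<A>. I \<rightarrow>\<^sub>E {0..<c}) = (\<Sum>I\<in>\<A>. card (I \<rightarrow>\<^sub>E {0..<c}))"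
    using assms by (intro card_SigmaI) (auto intro!: finite_PiE)
  also have "\<dots> = (\<Sum>I\<in>\<A>. c ^ k)" using assms by (intro sum.cong) (simp_all add: card_PiE)
  finally show ?thesis unfolding lift_data_def by (simp add: card_cartesian_product)
qed

lemma inj_on_lift:
  assumes "\<forall>I\<in>\<A>. I \<subseteq> {0..<n} \<and> I \<noteq> {}"
  shows "inj_on (lift c n) (lift_data r c \<A>)"
proof (rule inj_onI)
  fix x y assume x: "x \<in> lift_data r c \<A>" and y: "y \<in> lift_data r c \<A>" and e: "lift c n x = lift c n y"
  obtain a I t a' I' t' where xs: "x = (a, I, t)" and ys: "y = (a', I', t')" by (cases x, cases y) auto
  have I: "I \<subseteq> {0..<n}" "I \<noteq> {}" "t \<in> I \<rightarrow>\<^sub>E {0..<c}"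
    and I': "I' \<subseteq> {0..<n}" "t' \<in> I' \<rightarrow>\<^sub>E {0..<c}"
    using x y xs ys assms unfolding lift_data_def by auto
  have eq: "lift_pos c n a t ` I = lift_pos c n a' t' ` I'" using e xs ys unfolding lift_def by simp
  have match: "a = a' \<and> b \<in> I' \<and> t b = t' b"
    if "b \<in> I" "lift_pos c n a t ` I = lift_pos c n a' t' ` I'" "I \<subseteq> {0..<n}" "I' \<subseteq> {0..<n}"
      "t \<in> I \<rightarrow>\<^sub>E {0..<c}" "t' \<in> I' \<rightarrow>\<^sub>E {0..<c}"
    for a a' I I' t t' b
  proof -
    have "lift_pos c n a t b \<in> lift_pos c n a' t' ` I'" using that by blast
    then obtain b' where b': "b' \<in> I'" "lift_pos c n a t b = lift_pos c n a' t' b'" by auto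
    have "b < n" "t b < c" "b' < n" "t' b' < c" using that b' by auto
    from mixed_radix_unique[OF this b'(2)[unfolded lift_pos_def]] show ?thesis using b' by simp
  qed
  obtain b0 where "b0 \<in> I" using I by auto
  then have "a = a'" using match[OF _ eq I(1) I'(1) I(3) I'(2)] by simp
  moreover have "I = I'"
    using match[OF _ eq I(1) I'(1) I(3) I'(2)] match[OF _ eq[symmetric] I'(1) I(1) I'(2) I(3)]
    by blast
  moreover have "t = t'"
    using match[OF _ eq I(1) I'(1) I(3) I'(2)] I(3) I'(2) \<open>I = I'\<close>
    by (intro extensionalityI[of _ I]) (auto simp: PiE_iff)
  ultimately show "x = y" using xs ys by simp
qed

section \<open>Comparing pattern densities\<close>

lemma card_narrow_occurrences_increment:
  assumes "x \<le> z"
  shows "card (narrow_occurrences \<pi> \<sigma> z) + card (narrow_subsets (length \<sigma>) (length \<pi>) x)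
    \<le> card (narrow_occurrences \<pi> \<sigma> x) + card (narrow_subsets (length \<sigma>) (length \<pi>) z)"
proof -
  let ?Oz = "narrow_occurrences \<pi> \<sigma> z" and ?Ox = "narrow_occurrences \<pi> \<sigma> x"
  let ?Nx = "narrow_subsets (length \<sigma>) (length \<pi>) x" and ?Nz = "narrow_subsets (length \<sigma>) (length \<pi>) z"
  have sub: "?Oz \<subseteq> ?Ox \<union> (?Nz - ?Nx)"
    unfolding narrow_occurrences_def narrow_subsets_def occurrence_def by auto
  have mono: "?Nx \<subseteq> ?Nz" using narrow_subsets_mono[OF assms] .
  have "card ?Oz \<le> card ?Ox + card (?Nz - ?Nx)"
    using card_mono[OF _ sub] card_Un_le finite_narrow_occurrences finite_narrow_subsets
    by (metis finite_Diff finite_UnI order_trans)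
  also have "card (?Nz - ?Nx) = card ?Nz - card ?Nx"
    using card_Diff_subset[OF finite_subset[OF mono finite_narrow_subsets] mono] .
  finally show ?thesis using card_mono[OF finite_narrow_subsets mono] by linarith
qed

text \<open>Ox / N and Ot / Nt are the densities in \<sigma> and in its blow-up, Oy and N2 count at the
  enlarged width y / c + 2 that absorbs the width slack of the lifting. The share M * N / Nt of
  lifted sets among the narrow sets of the blow-up is at least q, and N2 / N is at most s.\<close>

lemma density_difference_bound:
  fixes Ox N Oy N2 Ot Nt M q s :: real
  assumes "N > 0" "M > 0" "Ox \<ge> 0" "Ox \<le> N" "N \<le> N2"
    "M * N \<le> Nt" "M * Ox \<le> Ot" "Ot + M * N \<le> M * Oy + Nt" "Oy + N \<le> Ox + N2"
    "q \<le> M * N / Nt" "N2 / N \<le> s"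
  shows "\<bar>Ot / Nt - Ox / N\<bar> \<le> (1 - q) + (s - 1)"
proof -
  have Nt: "Nt > 0" using assms(1,2,6) by (smt (verit) mult_pos_pos)
  define q0 where "q0 = M * N / Nt"
  define s0 where "s0 = N2 / N"
  define p where "p = Ox / N"
  have q0: "q0 \<le> 1" "q0 \<ge> 0" unfolding q0_def using Nt assms by (auto simp: field_simps)
  have s0: "s0 \<ge> 1" unfolding s0_def using assms by (auto simp: field_simps)
  have p: "p \<le> 1" "p \<ge> 0" unfolding p_def using assms by (auto simp: field_simps)
  have lower: "q0 * p \<le> Ot / Nt"
  proof -
    have "q0 * p = M * Ox / Nt" unfolding q0_def p_def using assms(1) by (simp add: field_simps)
    also have "\<dots> \<le> Ot / Nt" using assms(7) Nt by (simp add: divide_right_mono)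
    finally show ?thesis .
  qed
  have upper: "Ot / Nt \<le> q0 * p + q0 * (s0 - 1) + (1 - q0)"
  proof -
    have "M * Oy \<le> M * (Ox + N2 - N)" using assms(2,9) by (intro mult_left_mono) auto
    then have "Ot \<le> M * (Ox + N2 - N) + Nt - M * N" using assms(8) by linarith
    then have "Ot / Nt \<le> (M * (Ox + N2 - N) + Nt - M * N) / Nt" using Nt by (simp add: divide_right_mono)
    also have "\<dots> = q0 * p + q0 * (s0 - 1) + (1 - q0)"
      unfolding q0_def p_def s0_def using Nt assms(1) by (simp add: field_simps)
    finally show ?thesis .
  qed
  have "q0 * p \<le> p" "q0 * (s0 - 1) \<le> s0 - 1"
    using q0 p s0 by (simp_all add: mult_left_le_one_le)
  moreover have "(1 - q0) * p \<le> 1 - q0" using q0 p by (intro mult_left_le) auto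
  then have "p - q0 * p \<le> 1 - q0" by (simp add: algebra_simps)
  moreover have "q \<le> q0" "s0 \<le> s" using assms(10,11) unfolding q0_def s0_def by auto
  ultimately show ?thesis using lower upper s0 unfolding p_def abs_le_iff by linarith
qed

definition lift_fraction_bound :: "nat \<Rightarrow> nat \<Rightarrow> nat \<Rightarrow> real \<Rightarrow> nat \<Rightarrow> real" where
  "lift_fraction_bound k r c x n =
     (1 / (1 + 1 / real r)) * (1 - x / real n) * ((1 - real k / x) / (1 + 1 / real c)) ^ (k - 1)"

definition width_ratio_bound :: "nat \<Rightarrow> nat \<Rightarrow> real \<Rightarrow> nat \<Rightarrow> real" where
  "width_ratio_bound k c x n =
     (1 / (1 - x / real n)) * ((1 + 1 / real c + 2 / x) / (1 - real k / x)) ^ (k - 1)"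

definition blowup_error :: "nat \<Rightarrow> nat \<Rightarrow> nat \<Rightarrow> real \<Rightarrow> nat \<Rightarrow> real" where
  "blowup_error k r c x n = (1 - lift_fraction_bound k r c x n) + (width_ratio_bound k c x n - 1)"

lemma blowup_error_tendsto_zero:
  fixes r c n :: "nat \<Rightarrow> nat" and x :: "nat \<Rightarrow> real"
  assumes "filterlim r at_top sequentially" "filterlim c at_top sequentially"
    and "filterlim x at_top sequentially" "(\<lambda>j. x j / real (n j)) \<longlonglongrightarrow> 0"
  shows "(\<lambda>j. blowup_error k (r j) (c j) (x j) (n j)) \<longlonglongrightarrow> 0"
proof -
  have inverse_zero: "(\<lambda>j. a / real (s j)) \<longlonglongrightarrow> 0" if "filterlim s at_top sequentially" for s a
    using tendsto_mult_right_zero[OF tendsto_inverse_0_at_top[OF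
        filterlim_compose[OF filterlim_real_sequentially that]]]
    by (simp add: divide_inverse)
  have x_inverse: "(\<lambda>j. a / x j) \<longlonglongrightarrow> 0" for a
    using tendsto_mult_right_zero[OF tendsto_inverse_0_at_top[OF assms(3)]]
    by (simp add: divide_inverse)
  have "(\<lambda>j. blowup_error k (r j) (c j) (x j) (n j))
      \<longlonglongrightarrow> (1 - (1 / (1 + 0)) * (1 - 0) * ((1 - 0) / (1 + 0)) ^ (k - 1))
            + ((1 / (1 - 0)) * ((1 + 0 + 0) / (1 - 0)) ^ (k - 1) - 1)"
    unfolding blowup_error_def lift_fraction_bound_def width_ratio_bound_def
    by (intro tendsto_intros inverse_zero x_inverse assms) simp_all
  then show ?thesis by simp
qed

locale blowup_counting =
  fixes \<sigma> \<pi> :: "nat list" and c r m :: nat and x y :: real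
  assumes perm: "is_perm \<sigma>" and pattern_nonempty: "length \<pi> \<ge> 1"
    and c_pos: "c \<ge> 1" and r_pos: "r \<ge> 1"
    and copies_fit: "r * (c * length \<sigma>) \<le> m"
    and few_fixed_points: "real m < (real r + 1) * (real c * real (length \<sigma>))"
    and scale_lower: "real c * x \<le> y" and scale_upper: "y < (real c + 1) * x"
    and x_large: "real (length \<pi>) + 1 \<le> x" and x_small: "x < real (length \<sigma>)"
begin

abbreviation "n \<equiv> length \<sigma>"
abbreviation "k \<equiv> length \<pi>"
abbreviation "\<tau> \<equiv> blowup \<sigma> c r m"
abbreviation "M \<equiv> r * c ^ k"

abbreviation lifted :: "nat set set \<Rightarrow> nat set set" where
  "lifted \<A> \<equiv> lift c n ` lift_data r c \<A>"

lemma lift_data_memD: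
  assumes "(a, I, t) \<in> lift_data r c \<A>" "\<A> \<subseteq> narrow_subsets n k z"
  shows "a < r" "I \<in> \<A>" "I \<subseteq> {0..<n}" "card I = k" "real (width I) \<le> z"
    "t \<in> I \<rightarrow>\<^sub>E {0..<c}" "finite I" "I \<noteq> {}"
proof -
  show data: "a < r" "I \<in> \<A>" "t \<in> I \<rightarrow>\<^sub>E {0..<c}" using assms(1) unfolding lift_data_def by auto
  show I: "I \<subseteq> {0..<n}" "card I = k" "real (width I) \<le> z"
    using assms(2) data(2) unfolding narrow_subsets_def by auto
  show "finite I" using I(1) finite_subset by blast
  show "I \<noteq> {}" using I(2) pattern_nonempty by auto
qed

lemma lift_mem_narrow_subsets:
  assumes "(a, I, t) \<in> lift_data r c \<A>" "\<A> \<subseteq> narrow_subsets n k z"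
  shows "lift c n (a, I, t) \<in> narrow_subsets m k (real c * z)"
proof -
  note I = lift_data_memD[OF assms]
  have "real (width (lift c n (a, I, t))) \<le> real c * real (width I)"
    unfolding lift_def using width_lift_pos_image(1)[OF I(6-8) c_pos] by simp
  also have "\<dots> \<le> real c * z" using I(5) by (intro mult_left_mono) simp_all
  finally show ?thesis
    using lift_pos_image_subset[OF I(6,3,1)] copies_fit card_lift_pos_image[OF I(6)] I(4)
    unfolding narrow_subsets_def lift_def by auto
qed

lemma occurrence_lift_iff:
  assumes "(a, I, t) \<in> lift_data r c \<A>" "\<A> \<subseteq> narrow_subsets n k z"
  shows "occurrence \<pi> \<tau> (lift c n (a, I, t)) \<longleftrightarrow> occurrence \<pi> \<sigma> I"
  using occurrence_blowup_lift_pos_image[OF perm lift_data_memD(1,3,4,6)[OF assms] copies_fit]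
  unfolding lift_def by simp

lemma width_le_width_lift:
  assumes "(a, I, t) \<in> lift_data r c \<A>" "\<A> \<subseteq> narrow_subsets n k z"
  shows "real (width I) \<le> real (width (lift c n (a, I, t))) / real c + 2"
  using width_lift_pos_image(2)[OF lift_data_memD(6-8)[OF assms] c_pos] unfolding lift_def by simp

lemma card_lifted:
  assumes "\<A> \<subseteq> narrow_subsets n k z"
  shows "card (lifted \<A>) = M * card \<A>"
proof -
  have "I \<subseteq> {0..<n} \<and> I \<noteq> {} \<and> finite I \<and> card I = k" if "I \<in> \<A>" for I
  proof -
    have "I \<subseteq> {0..<n}" "card I = k" using assms that unfolding narrow_subsets_def by auto
    then show ?thesis using pattern_nonempty finite_subset by auto
  qed
  then show ?thesis
    using card_image[OF inj_on_lift] card_lift_data finite_subset[OF assms finite_narrow_subsets]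
    by (simp add: mult.assoc)
qed

lemma lifted_subset:
  assumes "\<A> \<subseteq> narrow_subsets n k z"
  shows "lifted \<A> \<subseteq> narrow_subsets m k (real c * z)"
proof
  fix J assume "J \<in> lifted \<A>"
  then obtain a I t where "J = lift c n (a, I, t)" "(a, I, t) \<in> lift_data r c \<A>" by auto
  then show "J \<in> narrow_subsets m k (real c * z)" using lift_mem_narrow_subsets[OF _ assms] by simp
qed

lemma lifted_narrow_subsets: "lifted (narrow_subsets n k x) \<subseteq> narrow_subsets m k y"
  using lifted_subset[OF order_refl] narrow_subsets_mono[OF scale_lower] by (rule order_trans)

lemma lifted_narrow_occurrences: "lifted (narrow_occurrences \<pi> \<sigma> x) \<subseteq> narrow_occurrences \<pi> \<tau> y"
proof
  fix J assume "J \<in> lifted (narrow_occurrences \<pi> \<sigma> x)"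
  then obtain a I t where J: "J = lift c n (a, I, t)"
    and data: "(a, I, t) \<in> lift_data r c (narrow_occurrences \<pi> \<sigma> x)" by auto
  note sub = narrow_occurrences_subset[of \<pi> \<sigma> x]
  have "occurrence \<pi> \<sigma> I"
    using lift_data_memD(2)[OF data sub] unfolding narrow_occurrences_def by simp
  then have "occurrence \<pi> \<tau> J" using occurrence_lift_iff[OF data sub] J by simp
  moreover have "real (width J) \<le> y"
    using lift_mem_narrow_subsets[OF data sub] scale_lower J unfolding narrow_subsets_def by auto
  ultimately show "J \<in> narrow_occurrences \<pi> \<tau> y" unfolding narrow_occurrences_def by simp
qed

lemma narrow_occurrences_blowup_subset:
  "narrow_occurrences \<pi> \<tau> y \<subseteq> lifted (narrow_occurrences \<pi> \<sigma> (y / real c + 2))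
     \<union> (narrow_subsets m k y - lifted (narrow_subsets n k x))"
proof
  fix J assume J: "J \<in> narrow_occurrences \<pi> \<tau> y"
  show "J \<in> lifted (narrow_occurrences \<pi> \<sigma> (y / real c + 2))
     \<union> (narrow_subsets m k y - lifted (narrow_subsets n k x))"
  proof (cases "J \<in> lifted (narrow_subsets n k x)")
    case True
    then obtain a I t where J_eq: "J = lift c n (a, I, t)"
      and data: "(a, I, t) \<in> lift_data r c (narrow_subsets n k x)" by auto
    note I = lift_data_memD[OF data order_refl]
    have "occurrence \<pi> \<sigma> I"
      using occurrence_lift_iff[OF data order_refl] J J_eq unfolding narrow_occurrences_def by simp
    moreover have "real (width J) / real c \<le> y / real c"
      using J by (simp add: divide_right_mono narrow_occurrences_def)
    then have "real (width I) \<le> y / real c + 2"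
      using width_le_width_lift[OF data order_refl] J_eq by simp
    ultimately have "(a, I, t) \<in> lift_data r c (narrow_occurrences \<pi> \<sigma> (y / real c + 2))"
      using I unfolding lift_data_def narrow_occurrences_def by simp
    then show ?thesis using J_eq by blast
  next
    case False
    then show ?thesis using J narrow_occurrences_subset[of \<pi> \<tau> y] by auto
  qed
qed

lemma card_narrow_occurrences_blowup_ge:
  "M * card (narrow_occurrences \<pi> \<sigma> x) \<le> card (narrow_occurrences \<pi> \<tau> y)"
proof -
  have "M * card (narrow_occurrences \<pi> \<sigma> x) = card (lifted (narrow_occurrences \<pi> \<sigma> x))"
    using card_lifted[OF narrow_occurrences_subset] by simp
  also have "\<dots> \<le> card (narrow_occurrences \<pi> \<tau> y)"
    by (rule card_mono[OF finite_narrow_occurrences lifted_narrow_occurrences])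
  finally show ?thesis .
qed

lemma card_narrow_subsets_blowup_ge:
  "M * card (narrow_subsets n k x) \<le> card (narrow_subsets m k y)"
proof -
  have "M * card (narrow_subsets n k x) = card (lifted (narrow_subsets n k x))"
    using card_lifted[OF order_refl] by simp
  also have "\<dots> \<le> card (narrow_subsets m k y)"
    by (rule card_mono[OF finite_narrow_subsets lifted_narrow_subsets])
  finally show ?thesis .
qed

lemma card_narrow_occurrences_blowup_le:
  "card (narrow_occurrences \<pi> \<tau> y) + M * card (narrow_subsets n k x)
    \<le> M * card (narrow_occurrences \<pi> \<sigma> (y / real c + 2)) + card (narrow_subsets m k y)"
proof -
  let ?A = "lifted (narrow_occurrences \<pi> \<sigma> (y / real c + 2))"
  let ?B = "lifted (narrow_subsets n k x)" and ?U = "narrow_subsets m k y"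
  have finite_B: "finite ?B" using finite_subset[OF lifted_narrow_subsets finite_narrow_subsets] .
  have "card (narrow_occurrences \<pi> \<tau> y) \<le> card (?A \<union> (?U - ?B))"
    using finite_subset[OF lifted_subset[OF narrow_occurrences_subset] finite_narrow_subsets]
    by (intro card_mono[OF _ narrow_occurrences_blowup_subset]) (simp add: finite_narrow_subsets)
  also have "\<dots> \<le> card ?A + card (?U - ?B)" by (rule card_Un_le)
  also have "card (?U - ?B) = card ?U - card ?B"
    by (rule card_Diff_subset[OF finite_B lifted_narrow_subsets])
  finally show ?thesis
    using card_lifted[OF narrow_occurrences_subset] card_lifted[OF order_refl]
      card_narrow_subsets_blowup_ge by simp
qed

lemma x_pos: "x > 0" using x_large by linarith

lemma y_pos: "y > 0"
proof -
  have "real c * x > 0" using c_pos x_pos by simp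
  then show ?thesis using scale_lower by linarith
qed

lemma n_pos: "real n > 0" using x_small x_pos by linarith

lemma card_narrow_subsets_lower:
  "(real n - x) * (x - real k) ^ (k - 1) \<le> fact (k - 1) * real (card (narrow_subsets n k x))"
  using card_narrow_subsets_lower_bound[OF pattern_nonempty x_large x_small] .

lemma narrow_subsets_lower_bound_pos: "(real n - x) * (x - real k) ^ (k - 1) > 0"
  using x_small x_large by simp

lemma card_narrow_subsets_pos: "real (card (narrow_subsets n k x)) > 0"
proof -
  have "fact (k - 1) * real (card (narrow_subsets n k x)) > 0"
    using card_narrow_subsets_lower narrow_subsets_lower_bound_pos by linarith
  then show ?thesis by (simp add: zero_less_mult_iff)
qed

lemma m_pos: "real m > 0"
proof -
  have "1 \<le> r * (c * n)" using r_pos c_pos is_perm_length_pos[OF perm] by simp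
  then have "1 \<le> m" using copies_fit by (rule order_trans)
  then show ?thesis by simp
qed

lemma card_narrow_subsets_blowup_pos: "real (card (narrow_subsets m k y)) > 0"
proof -
  have "real (M * card (narrow_subsets n k x)) \<le> real (card (narrow_subsets m k y))"
    using card_narrow_subsets_blowup_ge by (simp only: of_nat_le_iff)
  moreover have "real M * real (card (narrow_subsets n k x)) > 0"
    using card_narrow_subsets_pos r_pos c_pos by simp
  ultimately show ?thesis by simp
qed

lemma lower_factor_copies_le: "1 / (1 + 1 / real r) \<le> real r * real c * real n / real m"
proof -
  have "1 / (1 + 1 / real r) = real r / (real r + 1)" using r_pos by (simp add: field_simps)
  also have "\<dots> = real r * real c * real n / ((real r + 1) * (real c * real n))"
    using c_pos n_pos by (simp add: mult.assoc)
  also have "\<dots> \<le> real r * real c * real n / real m"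
    using few_fixed_points m_pos r_pos c_pos n_pos by (intro divide_left_mono) auto
  finally show ?thesis .
qed

lemma lower_factor_runs_le: "(1 - real k / x) / (1 + 1 / real c) \<le> real c * (x - real k) / y"
proof -
  have "(1 - real k / x) / (1 + 1 / real c) = real c * (x - real k) / ((real c + 1) * x)"
    using c_pos x_pos by (simp add: field_simps)
  also have "\<dots> \<le> real c * (x - real k) / y"
    using scale_upper x_large y_pos by (intro divide_left_mono) auto
  finally show ?thesis .
qed

lemma lift_fraction_bound_le:
  "lift_fraction_bound k r c x n
    \<le> real M * real (card (narrow_subsets n k x)) / real (card (narrow_subsets m k y))"
proof -
  define F :: real where "F = fact (k - 1)"
  define N where "N = real (card (narrow_subsets n k x))"
  define Nt where "Nt = real (card (narrow_subsets m k y))"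
  have F: "F > 0" unfolding F_def by simp
  have N: "N > 0" unfolding N_def using card_narrow_subsets_pos .
  have Nt: "Nt > 0" unfolding Nt_def using card_narrow_subsets_blowup_pos .
  have offsets_nonneg: "0 \<le> (1 - real k / x) / (1 + 1 / real c)"
    using x_pos x_large c_pos by (simp add: field_simps)
  have "lift_fraction_bound k r c x n
      \<le> (real r * real c * real n / real m) * ((real n - x) / real n) * (real c * (x - real k) / y) ^ (k - 1)"
    unfolding lift_fraction_bound_def using n_pos x_small x_large c_pos offsets_nonneg
    by (intro mult_mono lower_factor_copies_le power_mono lower_factor_runs_le order_refl) (auto simp: diff_divide_distrib)
  also have "\<dots> = real M * ((real n - x) * (x - real k) ^ (k - 1)) / (real m * y ^ (k - 1))"
  proof -
    have regroup: "rr * cc * nn / mm * ((nn - xx) / nn) * (C * P / Y)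
        = rr * (cc * C) * ((nn - xx) * P) / (mm * Y)"
      if "nn > 0" "mm > 0" "Y > 0" for rr cc C nn xx P mm Y :: real
      using that by (simp add: field_simps)
    have "real c ^ k = real c * real c ^ (k - 1)"
      using pattern_nonempty by (cases k) auto
    then show ?thesis
      unfolding power_mult_distrib power_divide using regroup n_pos m_pos y_pos by simp
  qed
  also have "\<dots> \<le> real M * (F * N) / (F * Nt)"
  proof (rule frac_le)
    show "real M * ((real n - x) * (x - real k) ^ (k - 1)) \<le> real M * (F * N)"
      using card_narrow_subsets_lower unfolding F_def N_def by (intro mult_left_mono) auto
    show "F * Nt \<le> real m * y ^ (k - 1)"
      using card_narrow_subsets_upper_bound[OF pattern_nonempty, of y m] y_pos
      unfolding F_def Nt_def by simp
  qed (use F N Nt in auto)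
  also have "\<dots> = real M * N / Nt" using F by simp
  finally show ?thesis unfolding N_def Nt_def .
qed

lemma card_ratio_le_width_ratio_bound:
  "real (card (narrow_subsets n k (y / real c + 2))) / real (card (narrow_subsets n k x))
    \<le> width_ratio_bound k c x n"
proof -
  define F :: real where "F = fact (k - 1)"
  define l where "l = y / real c + 2"
  have F: "F > 0" unfolding F_def by simp
  have l: "l \<ge> 0" unfolding l_def using y_pos by simp
  have slack: "l / (x - real k) \<le> (1 + 1 / real c + 2 / x) / (1 - real k / x)"
  proof -
    have "y / real c \<le> (real c + 1) * x / real c"
      using scale_upper c_pos by (simp add: divide_right_mono)
    moreover have "(real c + 1) * x / real c = x + x / real c" using c_pos by (simp add: field_simps)
    ultimately have "l \<le> x + x / real c + 2" unfolding l_def by linarith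
    then have "l / (x - real k) \<le> (x + x / real c + 2) / (x - real k)"
      using x_large by (simp add: divide_right_mono)
    also have "\<dots> = (1 + 1 / real c + 2 / x) / (1 - real k / x)"
      using x_pos x_large c_pos by (simp add: field_simps)
    finally show ?thesis .
  qed
  have "real (card (narrow_subsets n k l)) / real (card (narrow_subsets n k x))
      = F * real (card (narrow_subsets n k l)) / (F * real (card (narrow_subsets n k x)))"
    using F by simp
  also have "\<dots> \<le> (real n * l ^ (k - 1)) / ((real n - x) * (x - real k) ^ (k - 1))"
    using card_narrow_subsets_upper_bound[OF pattern_nonempty l] card_narrow_subsets_lower
      narrow_subsets_lower_bound_pos n_pos l unfolding F_def
    by (intro frac_le) auto
  also have "\<dots> = (1 / (1 - x / real n)) * (l / (x - real k)) ^ (k - 1)"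
    using n_pos x_small x_large by (simp add: power_divide field_simps)
  also have "\<dots> \<le> width_ratio_bound k c x n"
    unfolding width_ratio_bound_def using slack l x_small x_large n_pos
    by (intro mult_left_mono power_mono) (auto simp: field_simps)
  finally show ?thesis unfolding l_def .
qed

lemma rho_blowup_close: "\<bar>rho y \<pi> \<tau> - rho x \<pi> \<sigma>\<bar> \<le> blowup_error k r c x n"
proof -
  let ?l = "y / real c + 2"
  have "x \<le> y / real c" using scale_lower c_pos by (simp add: field_simps)
  then have "x \<le> ?l" by simp
  have "\<bar>real (card (narrow_occurrences \<pi> \<tau> y)) / real (card (narrow_subsets m k y))
       - real (card (narrow_occurrences \<pi> \<sigma> x)) / real (card (narrow_subsets n k x))\<bar>
     \<le> blowup_error k r c x n"
    unfolding blowup_error_def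
  proof (rule density_difference_bound[OF card_narrow_subsets_pos])
    show "real M > 0" using r_pos c_pos by simp
    show "real (card (narrow_occurrences \<pi> \<sigma> x)) \<le> real (card (narrow_subsets n k x))"
      by (simp add: card_mono finite_narrow_subsets narrow_occurrences_subset)
    show "real (card (narrow_subsets n k x)) \<le> real (card (narrow_subsets n k ?l))"
      by (simp add: card_mono finite_narrow_subsets narrow_subsets_mono[OF \<open>x \<le> ?l\<close>])
    show "real M * real (card (narrow_subsets n k x)) \<le> real (card (narrow_subsets m k y))"
      using card_narrow_subsets_blowup_ge by (simp only: of_nat_mult[symmetric] of_nat_le_iff)
    show "real M * real (card (narrow_occurrences \<pi> \<sigma> x)) \<le> real (card (narrow_occurrences \<pi> \<tau> y))"
      using card_narrow_occurrences_blowup_ge by (simp only: of_nat_mult[symmetric] of_nat_le_iff)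
    show "real (card (narrow_occurrences \<pi> \<tau> y)) + real M * real (card (narrow_subsets n k x))
      \<le> real M * real (card (narrow_occurrences \<pi> \<sigma> ?l)) + real (card (narrow_subsets m k y))"
      using card_narrow_occurrences_blowup_le by (simp only: of_nat_mult[symmetric] of_nat_add[symmetric] of_nat_le_iff)
    show "real (card (narrow_occurrences \<pi> \<sigma> ?l)) + real (card (narrow_subsets n k x))
      \<le> real (card (narrow_occurrences \<pi> \<sigma> x)) + real (card (narrow_subsets n k ?l))"
      using card_narrow_occurrences_increment[OF \<open>x \<le> ?l\<close>] by (simp only: of_nat_add[symmetric] of_nat_le_iff)
  qed (use lift_fraction_bound_le card_ratio_le_width_ratio_bound in simp_all)
  then show ?thesis by (simp add: rho_eq_card_ratio)
qed

end

section \<open>Choice of the blow-up parameters\<close>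

definition blowup_parameters ::
    "(nat \<Rightarrow> real) \<Rightarrow> nat \<Rightarrow> real \<Rightarrow> nat \<Rightarrow> nat \<Rightarrow> nat \<Rightarrow> nat \<Rightarrow> bool" where
  "blowup_parameters g n x j m c r \<longleftrightarrow>
     j + 1 \<le> c \<and> j + 1 \<le> r \<and> r * (c * n) \<le> m \<and> real m < (real r + 1) * (real c * real n)
     \<and> real c * x \<le> g m \<and> g m < (real c + 1) * x"

lemma exists_blowup_parameters:
  fixes g :: "nat \<Rightarrow> real" and n j :: nat and x :: real
  assumes g: "filterlim g at_top sequentially" "(\<lambda>m. g m / real m) \<longlonglongrightarrow> 0"
    and n: "n \<ge> 1" and x: "x > 0"
  shows "\<exists>m c r. blowup_parameters g n x j m c r"
proof -
  have "\<forall>\<^sub>F m in sequentially. real (j + 1) * x \<le> g m" using g(1) by (simp add: filterlim_at_top)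
  moreover have "\<forall>\<^sub>F m in sequentially. g m / real m < x / (real n * real (j + 1))"
    using n x by (intro order_tendstoD(2)[OF g(2)]) simp
  moreover have "\<forall>\<^sub>F m in sequentially. 1 \<le> m" by (rule eventually_ge_at_top)
  ultimately have "\<forall>\<^sub>F m in sequentially. real (j + 1) * x \<le> g m
      \<and> g m / real m < x / (real n * real (j + 1)) \<and> 1 \<le> m"
    by eventually_elim simp
  then obtain m where large: "real (j + 1) * x \<le> g m"
    and sparse: "g m / real m < x / (real n * real (j + 1))" and m: "1 \<le> m"
    unfolding eventually_sequentially by blast
  define c where "c = nat \<lfloor>g m / x\<rfloor>"
  define r where "r = m div (c * n)"
  have ratio: "real (j + 1) \<le> g m / x" using large x by (simp add: field_simps)
  then have c: "j + 1 \<le> c" unfolding c_def by linarith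
  have "real c \<le> g m / x" "g m / x < real c + 1" unfolding c_def using ratio by linarith+
  then have scale: "real c * x \<le> g m" "g m < (real c + 1) * x" using x by (simp_all add: field_simps)
  have "real c * x * (real n * real (j + 1)) < x * real m"
  proof -
    have D: "real n * real (j + 1) > 0" using n by auto
    have "g m * (real n * real (j + 1)) / real m < x"
      using sparse D by (simp add: less_divide_eq)
    then have "g m * (real n * real (j + 1)) < x * real m" using m by (simp add: divide_less_eq)
    moreover have "real c * x * (real n * real (j + 1)) \<le> g m * (real n * real (j + 1))"
      using scale(1) by (intro mult_right_mono) auto
    ultimately show ?thesis by linarith
  qed
  then have "x * (real c * real n * real (j + 1)) < x * real m" by (simp add: algebra_simps)
  then have "real c * real n * real (j + 1) < real m" using x by simp
  then have "real ((j + 1) * (c * n)) < real m" by (simp add: algebra_simps)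
  then have "(j + 1) * (c * n) < m" by (simp only: of_nat_less_iff)
  then have fit: "(j + 1) * (c * n) \<le> m" by simp
  have cn: "c * n > 0" using c n by simp
  have r: "j + 1 \<le> r" unfolding r_def using div_le_mono[OF fit, of "c * n"] cn by simp
  have decomp: "m = r * (c * n) + m mod (c * n)" unfolding r_def by (rule div_mult_mod_eq[symmetric])
  moreover have "m mod (c * n) < c * n" using cn by simp
  ultimately have "m < (r + 1) * (c * n)" by (simp add: algebra_simps)
  then have "real m < real ((r + 1) * (c * n))" by (simp only: of_nat_less_iff)
  then have "real m < (real r + 1) * (real c * real n)" by (simp add: algebra_simps)
  moreover have "r * (c * n) \<le> m" using decomp by linarith
  ultimately show ?thesis using c r scale unfolding blowup_parameters_def by blast
qed

lemma is_perm_blowup_if_parameters: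
  assumes "blowup_parameters g (length \<sigma>) x j m c r" "is_perm \<sigma>"
  shows "is_perm (blowup \<sigma> c r m)"
proof (rule is_perm_blowup[OF assms(2)])
  show "c \<ge> 1" "r * (c * length \<sigma>) \<le> m" using assms(1) unfolding blowup_parameters_def by auto
  have "1 \<le> r * (c * length \<sigma>)"
    using assms is_perm_length_pos unfolding blowup_parameters_def by simp
  then show "m \<ge> 1" using \<open>r * (c * length \<sigma>) \<le> m\<close> by (rule order_trans)
qed

lemma blowup_counting_if_parameters:
  assumes "blowup_parameters g (length \<sigma>) x j m c r" "is_perm \<sigma>" "is_perm \<pi>"
    and "real (length \<pi>) + 1 \<le> x" "x < real (length \<sigma>)"
  shows "blowup_counting \<sigma> \<pi> c r m x (g m)"
  using assms is_perm_length_pos[OF assms(3)] unfolding blowup_parameters_def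
  by unfold_locales auto

lemma filterlim_at_top_if_ge_index:
  fixes s :: "nat \<Rightarrow> nat"
  assumes "\<And>j. j \<le> s j"
  shows "filterlim s at_top sequentially"
  by (rule filterlim_at_top_mono[OF filterlim_ident]) (simp add: assms)

lemma tendsto_if_eventually_close:
  fixes a b e :: "nat \<Rightarrow> real"
  assumes "\<forall>\<^sub>F j in sequentially. \<bar>a j - b j\<bar> \<le> e j" "b \<longlonglongrightarrow> L" "e \<longlonglongrightarrow> 0"
  shows "a \<longlonglongrightarrow> L"
proof -
  have "(\<lambda>j. a j - b j) \<longlonglongrightarrow> 0"
  proof (rule tendsto_sandwich[of "\<lambda>j. - e j" _ _ e])
    show "\<forall>\<^sub>F j in sequentially. - e j \<le> a j - b j"
      using assms(1) by (rule eventually_mono) linarith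
    show "\<forall>\<^sub>F j in sequentially. a j - b j \<le> e j"
      using assms(1) by (rule eventually_mono) linarith
    show "(\<lambda>j. - e j) \<longlonglongrightarrow> 0" using tendsto_minus[OF assms(3)] by simp
  qed (rule assms(3))
  then show ?thesis using assms(2) by (rule Lim_transform[rotated])
qed

lemma blowup_converges_at_scale:
  fixes f g :: "nat \<Rightarrow> real" and \<sigma>s :: "nat \<Rightarrow> nat list" and c r m :: "nat \<Rightarrow> nat"
  assumes f: "filterlim f at_top sequentially" "(\<lambda>n. f n / real n) \<longlonglongrightarrow> 0"
    and perm: "\<And>j. is_perm (\<sigma>s j)" and conv: "converges_at_scale f \<sigma>s \<Xi>"
    and params: "\<And>j. blowup_parameters g (length (\<sigma>s j)) (f (length (\<sigma>s j))) j (m j) (c j) (r j)"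
  shows "converges_at_scale g (\<lambda>j. blowup (\<sigma>s j) (c j) (r j) (m j)) \<Xi>"
  unfolding converges_at_scale_def length_blowup
proof (intro conjI allI impI)
  have c: "\<And>j. j + 1 \<le> c j" and r: "\<And>j. j + 1 \<le> r j"
    and fit: "\<And>j. r j * (c j * length (\<sigma>s j)) \<le> m j"
    using params unfolding blowup_parameters_def by simp_all
  define n where "n j = length (\<sigma>s j)" for j
  have n_top: "filterlim n at_top sequentially" using conv unfolding converges_at_scale_def n_def by simp
  have "j \<le> m j" for j
  proof -
    have "1 \<le> c j * n j" using c[of j] is_perm_length_pos[OF perm[of j]] unfolding n_def by simp
    then have "r j * 1 \<le> r j * (c j * n j)" by (rule mult_le_mono2)
    then have "j + 1 \<le> r j * (c j * n j)" using r[of j] by linarith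
    then show ?thesis using fit[of j] unfolding n_def by linarith
  qed
  then show "filterlim m at_top sequentially" by (rule filterlim_at_top_if_ge_index)
  fix \<pi> :: "nat list" assume \<pi>: "is_perm \<pi>"
  define x where "x j = f (n j)" for j
  have x_top: "filterlim x at_top sequentially" unfolding x_def by (rule filterlim_compose[OF f(1) n_top])
  have x_small: "(\<lambda>j. x j / real (n j)) \<longlonglongrightarrow> 0" unfolding x_def by (rule filterlim_compose[OF f(2) n_top])
  have "j \<le> r j" "j \<le> c j" for j using r[of j] c[of j] by simp_all
  then have error: "(\<lambda>j. blowup_error (length \<pi>) (r j) (c j) (x j) (n j)) \<longlonglongrightarrow> 0"
    by (intro blowup_error_tendsto_zero filterlim_at_top_if_ge_index x_top x_small)
  have "\<forall>\<^sub>F j in sequentially. real (length \<pi>) + 1 \<le> x j" using x_top by (simp add: filterlim_at_top)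
  moreover have "\<forall>\<^sub>F j in sequentially. x j / real (n j) < 1" by (rule order_tendstoD(2)[OF x_small]) simp
  ultimately have close: "\<forall>\<^sub>F j in sequentially. \<bar>rho (g (m j)) \<pi> (blowup (\<sigma>s j) (c j) (r j) (m j))
      - rho (x j) \<pi> (\<sigma>s j)\<bar> \<le> blowup_error (length \<pi>) (r j) (c j) (x j) (n j)"
  proof eventually_elim
    case (elim j)
    have "x j < real (n j)"
      using elim is_perm_length_pos[OF perm[of j]] divide_less_eq_1_pos[of "real (n j)" "x j"]
      unfolding n_def by fastforce
    then show ?case
      using blowup_counting.rho_blowup_close[OF blowup_counting_if_parameters[OF params perm \<pi>]] elim
      unfolding x_def n_def by simp
  qed
  moreover have "(\<lambda>j. rho (x j) \<pi> (\<sigma>s j)) \<longlonglongrightarrow> \<Xi> \<pi>"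
    using conv \<pi> unfolding converges_at_scale_def x_def n_def by blast
  ultimately show "(\<lambda>j. rho (g (m j)) \<pi> (blowup (\<sigma>s j) (c j) (r j) (m j))) \<longlonglongrightarrow> \<Xi> \<pi>"
    using error by (rule tendsto_if_eventually_close)
qed

theorem mainTheorem4:
  fixes f fb :: "nat \<Rightarrow> real" and \<sigma>s :: "nat \<Rightarrow> nat list" and \<Xi> :: "nat list \<Rightarrow> real"
  assumes "scaling_function f" and "scaling_function fb" and "much_less f fb"
    and "\<forall>j. is_perm (\<sigma>s j)"
    and "\<forall>\<pi>. is_perm \<pi> \<longrightarrow> 0 \<le> \<Xi> \<pi> \<and> \<Xi> \<pi> \<le> 1"
    and "converges_at_scale f \<sigma>s \<Xi>"
  shows "\<exists>\<tau>s :: nat \<Rightarrow> nat list. (\<forall>j. is_perm (\<tau>s j)) \<and> converges_at_scale fb \<tau>s \<Xi>"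
proof -
  have f: "filterlim f at_top sequentially" "(\<lambda>n. f n / real n) \<longlonglongrightarrow> 0" "\<And>n. n \<ge> 1 \<Longrightarrow> f n > 0"
    and fb: "filterlim fb at_top sequentially" "(\<lambda>n. fb n / real n) \<longlonglongrightarrow> 0"
    using assms(1,2) unfolding scaling_function_def by auto
  have perm: "\<And>j. is_perm (\<sigma>s j)" using assms(4) by simp
  let ?params = "\<lambda>j. blowup_parameters fb (length (\<sigma>s j)) (f (length (\<sigma>s j))) j"
  have "\<exists>m c r. ?params j m c r" for j
    using exists_blowup_parameters[OF fb is_perm_length_pos[OF perm]
        f(3)[OF is_perm_length_pos[OF perm]]] .
  then obtain m where "\<forall>j. \<exists>c r. ?params j (m j) c r"
    using choice[of "\<lambda>j m. \<exists>c r. ?params j m c r"] by blast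
  then obtain c where "\<forall>j. \<exists>r. ?params j (m j) (c j) r"
    using choice[of "\<lambda>j c. \<exists>r. ?params j (m j) c r"] by blast
  then obtain r where "\<forall>j. ?params j (m j) (c j) (r j)"
    using choice[of "\<lambda>j r. ?params j (m j) (c j) r"] by blast
  then have params: "\<And>j. ?params j (m j) (c j) (r j)" by blast
  have "is_perm (blowup (\<sigma>s j) (c j) (r j) (m j))" for j
    using is_perm_blowup_if_parameters[OF params perm] .
  moreover have "converges_at_scale fb (\<lambda>j. blowup (\<sigma>s j) (c j) (r j) (m j)) \<Xi>"
    using blowup_converges_at_scale[OF f(1,2) perm assms(6) params] .
  ultimately show ?thesis by (intro exI[of _ "\<lambda>j. blowup (\<sigma>s j) (c j) (r j) (m j)"] conjI allI)
qed

end
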